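(* Let $k\leq n/2$. Then the threshold language $T_{n,k}=\{ w \in \{0,1\}^n : |w|_1\geq k \}$ requires regular expressions of length $\mathrm{rpn}(T_{n,k}) \geq n k^{\Omega( \log k)}$.
   Context: $|w|_1$ is the number of ones in $w$. Regular expressions are built from $\epsilon$ and letters by union and concatenation (no $\emptyset$); $\mathrm{rpn}(L)$ is the minimum number of syntax-tree nodes of an expression describing $L$. Logarithms are base 2. *)

theory Defs
  imports Complex_Main
begin

text \<open>Star-free, emptyset-free regular expressions over the alphabet {0,1}
  (letter 1 is True, letter 0 is False), built from epsilon and letters by
  union and concatenation.\<close>

datatype rexp = Eps | Lit bool | Union rexp rexp | Concat rexp rexp

fun lang :: "rexp \<Rightarrow> bool list set" where
  "lang Eps = {[]}"
| "lang (Lit a) = {[a]}"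
| "lang (Union r s) = lang r \<union> lang s"
| "lang (Concat r s) = {u @ v | u v. u \<in> lang r \<and> v \<in> lang s}"

fun nodes :: "rexp \<Rightarrow> nat" where
  "nodes Eps = 1"
| "nodes (Lit a) = 1"
| "nodes (Union r s) = nodes r + nodes s + 1"
| "nodes (Concat r s) = nodes r + nodes s + 1"

definition rpn :: "bool list set \<Rightarrow> nat" where
  "rpn L = (LEAST m. \<exists>r. lang r = L \<and> nodes r = m)"

definition ones :: "bool list \<Rightarrow> nat" where
  "ones w = length (filter id w)"

definition threshold_lang :: "nat \<Rightarrow> nat \<Rightarrow> bool list set" where
  "threshold_lang n k = {w. length w = n \<and> ones w \<ge> k}"

end

theory Submission
  imports Defs "HOL-Library.Discrete_Functions"
begin

text \<open>Only the words of minimum weight are counted. Let \<open>r\<close> be an expression all of whose words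
  have length \<open>l\<close>, let \<open>m\<close> be their minimum number of ones and \<open>A\<close> the set of words attaining it.
  For a slice (the words of length \<open>L\<close> and weight \<open>d\<close>) we show by induction on \<open>r\<close> that
  \<open>|A| \<cdot> (L - l choose d - m) \<cdot> potential L d \<le> leaves r \<cdot> (L choose d)\<close>, where
  \<open>potential L d = L \<cdot> g(k) / k\<close> for \<open>k = min d (L - d)\<close> and a growth function \<open>g(k) = k\<^bsup>\<Theta>(log k)\<^esup>\<close>,
  as long as \<open>r\<close> carries at least half of the letters that are in the minority in the slice.
  Unions add up. In a concatenation either a factor still carries half of the minority letters,
  or one carries between a quarter and a half of them; then a splitting inequality for the
  hypergeometric distribution, \<open>potential L d \<cdot> P[X = m] \<le> potential l m\<close>, lets the induction
  restart at the factor's own slice. The splitting inequality follows from Markov's inequality when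
  \<open>g\<close> does not drop, from factorial-moment tail bounds when \<open>m\<close> is far from the mean, and from an
  anticoncentration bound near the mean. For the threshold language the words of minimum weight form
  the whole slice of weight \<open>k\<close>, so it needs at least \<open>potential n k = n \<cdot> g(k) / k\<close> leaves.\<close>

section \<open>Binomial coefficients and the hypergeometric distribution\<close>

lemma choose_mult_choose_le_choose_add:
  "(m choose i) * (n choose j) \<le> (m + n) choose (i + j)"
proof -
  have "(m choose i) * (n choose (i + j - i)) \<le> (\<Sum>k\<le>i+j. (m choose k) * (n choose (i + j - k)))"
    by (rule member_le_sum) auto
  also have "\<dots> = (m + n) choose (i + j)" by (rule vandermonde)
  finally show ?thesis by simp
qed

lemma Suc_times_choose_Suc: "Suc k * (n choose Suc k) = (n - k) * (n choose k)"
  using binomial_absorb_comp[of n k] binomial_absorption[of k n] by simp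

lemma choose_choose_mult_choose_le:
  assumes "r \<le> a"
  shows "(a + b choose a) * (c + e choose c) * (a choose r)
    \<le> (a + b choose r) * (a + b + c + e - r choose (a + c - r))"
proof -
  have "(a + b choose a) * (c + e choose c) * (a choose r)
      = (a + b choose r) * ((a + b - r choose (a - r)) * (c + e choose c))"
    using choose_mult[of r a "a + b"] assms by (simp add: ac_simps)
  also have "(a + b - r choose (a - r)) * (c + e choose c) \<le> a + b + c + e - r choose (a + c - r)"
    using choose_mult_choose_le_choose_add[of "a + b - r" "a - r" "c + e" c] assms
    by (simp add: add.assoc)
  finally show ?thesis by simp
qed

lemma choose_diff_mult_pow_le:
  assumes "r \<le> d" "d \<le> L"
  shows "real (L - r choose (d - r)) * real L ^ r \<le> real (L choose d) * real d ^ r"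
  using assms
proof (induction r)
  case 0
  then show ?case by simp
next
  case (Suc r)
  have IH: "real (L - r choose (d - r)) * real L ^ r \<le> real (L choose d) * real d ^ r"
    using Suc by simp
  have pos: "real (L - r) > 0" using Suc.prems by simp
  have "(L - Suc r choose (d - Suc r)) * (L - r) = (L - r choose (d - r)) * (d - r)"
    using Suc_times_binomial_eq[of "L - Suc r" "d - Suc r"] Suc.prems
    by (simp add: Suc_diff_Suc mult.commute)
  then have step: "real (L - Suc r choose (d - Suc r)) * real (L - r) = real (L - r choose (d - r)) * real (d - r)"
    by (metis of_nat_mult)
  have ratio: "real (d - r) * real L \<le> real d * real (L - r)"
    using Suc.prems by (simp add: of_nat_diff algebra_simps mult_right_mono)
  have "real (L - Suc r choose (d - Suc r)) * real L ^ Suc r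
      = real (L - r choose (d - r)) * (real (d - r) * real L / real (L - r)) * real L ^ r"
    using step pos by (simp add: field_simps)
  also have "\<dots> \<le> real (L - r choose (d - r)) * real d * real L ^ r"
    using ratio pos by (intro mult_right_mono mult_left_mono) (auto simp: divide_le_eq)
  also have "\<dots> \<le> real d * (real (L choose d) * real d ^ r)"
    using IH by (simp add: mult_left_mono mult.assoc mult.left_commute)
  also have "\<dots> = real (L choose d) * real d ^ Suc r"
    by simp
  finally show ?case .
qed

lemma choose_le_choose_mult_pow:
  assumes "r \<le> a" "a \<le> l"
  shows "real (l choose r) \<le> real (a choose r) * (real l / real (a - r + 1)) ^ r"
  using assms
proof (induction r)
  case 0
  then show ?case by simp
next
  case (Suc r)
  have IH: "real (l choose r) \<le> real (a choose r) * (real l / real (a - r + 1)) ^ r"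
    using Suc by simp
  have ar: "real (a - r) > 0" and q: "a - Suc r + 1 = a - r" using Suc.prems by auto
  have l_step: "real (l choose Suc r) * real (Suc r) = real (l choose r) * real (l - r)"
    and a_step: "real (a choose Suc r) * real (Suc r) = real (a choose r) * real (a - r)"
    by (metis Suc_times_choose_Suc mult.commute of_nat_mult)+
  have "real (l choose Suc r) = real (l choose r) * real (l - r) / real (Suc r)"
    using l_step by (simp add: field_simps)
  also have "\<dots> \<le> real (a choose r) * (real l / real (a - r)) ^ r * real l / real (Suc r)"
  proof -
    have "(real l / real (a - r + 1)) ^ r \<le> (real l / real (a - r)) ^ r"
      using ar by (intro power_mono divide_left_mono) auto
    then have "real (l choose r) \<le> real (a choose r) * (real l / real (a - r)) ^ r"
      using IH by (meson mult_left_mono of_nat_0_le_iff order_trans)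
    then show ?thesis
      by (intro divide_right_mono mult_mono) auto
  qed
  also have "\<dots> = real (a choose r) * real (a - r) / real (Suc r) * (real l / real (a - r)) ^ Suc r"
  proof -
    have "X * (Y / A) ^ r * Y / S = X * A / S * (Y / A) ^ Suc r" if "A > 0" for X Y A S :: real
      using that by (simp add: field_simps)
    then show ?thesis using ar by blast
  qed
  also have "real (a choose r) * real (a - r) / real (Suc r) = real (a choose Suc r)"
    using a_step by (simp add: field_simps)
  finally show ?case using q by simp
qed

text \<open>Markov's inequality for the \<open>r\<close>-th factorial moment of a hypergeometric variable: the
  left-hand side, divided by \<open>(a+b+c+e) choose (a+c)\<close>, is the probability that a random
  \<open>(a+c)\<close>-subset of an \<open>(a+b+c+e)\<close>-set meets a fixed \<open>(a+b)\<close>-subset in exactly \<open>a\<close> points.\<close>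

lemma choose_mult_choose_le_pow:
  assumes "r \<le> a" "1 \<le> a"
  shows "real (a + b choose a) * real (c + e choose c)
    \<le> real (a + b + c + e choose (a + c))
        * (real (a + b) * real (a + c) / (real (a + b + c + e) * real (a - r + 1))) ^ r"
proof -
  define L where "L = a + b + c + e"
  define d where "d = a + c"
  define l where "l = a + b"
  have L_pos: "real L > 0" and choose_pos: "real (a choose r) > 0"
    using assms by (simp_all add: L_def)
  have double_count: "real (a + b choose a) * real (c + e choose c) * real (a choose r)
      \<le> real (l choose r) * real (L - r choose (d - r))"
    using choose_choose_mult_choose_le[OF assms(1), of b c e]
    unfolding L_def d_def l_def by (metis of_nat_le_iff of_nat_mult)
  have "real (L - r choose (d - r)) * real L ^ r \<le> real (L choose d) * real d ^ r"
    using assms by (intro choose_diff_mult_pow_le) (auto simp: L_def d_def)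
  then have tail: "real (L - r choose (d - r)) \<le> real (L choose d) * (real d / real L) ^ r"
    using L_pos by (simp add: power_divide field_simps)
  have "real (a choose r) * (real (a + b choose a) * real (c + e choose c))
      \<le> (real (a choose r) * (real l / real (a - r + 1)) ^ r) * (real (L choose d) * (real d / real L) ^ r)"
    using double_count mult_mono[OF choose_le_choose_mult_pow[OF assms(1), of l] tail]
    by (simp add: l_def mult.commute)
  also have "\<dots> = real (a choose r) * (real (L choose d) * (real l * real d / (real L * real (a - r + 1))) ^ r)"
    by (simp add: power_divide power_mult_distrib ac_simps)
  finally show ?thesis
    using choose_pos by (simp add: L_def d_def l_def mult_le_cancel_left_pos)
qed

lemma choose_add_swap: "(a + b choose a) = (a + b choose b)"
  using binomial_symmetric[of a "a + b"] by simp

lemma choose_mult_choose_le_decay: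
  assumes "1 \<le> a"
    and deviation: "4 * (real (a + b) * real (a + c)) \<le> 3 * (real (a + b + c + e) * real a)"
  shows "real (a + b + c + e) * real a * (real (a + b choose a) * real (c + e choose c))
    \<le> 10/9 * real (a + b) * real (a + c) * real (a + b + c + e choose (a + c)) * (5/6) ^ (a div 10)"
proof -
  define r where "r = a div 10 + 1"
  define L where "L = a + b + c + e"
  define rho where "rho = real (a + b) * real (a + c) / (real L * real a)"
  define x where "x = real (a + b) * real (a + c) / (real L * real (a - r + 1))"
  have r_le: "r \<le> a" using assms(1) by (simp add: r_def)
  have pos: "real L > 0" "real a > 0" using assms(1) by (simp_all add: L_def)
  have "9 * a \<le> 10 * (a - r + 1)"
    using r_le by (simp add: r_def)
  then have "real (9 * a) \<le> real (10 * (a - r + 1))"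
    by (simp only: of_nat_le_iff)
  then have "9/10 * real a \<le> real (a - r + 1)"
    by simp
  then have "real L * (9/10 * real a) \<le> real L * real (a - r + 1)"
    using pos by (intro mult_left_mono) auto
  then have "x \<le> real (a + b) * real (a + c) / (real L * (9/10 * real a))"
    unfolding x_def using pos by (intro divide_left_mono) auto
  also have "\<dots> = 10/9 * rho"
    using pos by (simp add: rho_def field_simps)
  finally have x_le: "x \<le> 10/9 * rho" .
  have rho_le: "rho \<le> 3/4"
    using deviation pos by (simp add: rho_def L_def divide_le_eq)
  have "x ^ r = x * x ^ (a div 10)"
    by (simp add: r_def)
  also have "\<dots> \<le> (10/9 * rho) * (5/6) ^ (a div 10)"
  proof (intro mult_mono power_mono)
    show "x \<le> 5/6"
      using x_le rho_le by linarith
  qed (use x_le in \<open>auto simp: x_def rho_def\<close>)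
  finally have x_pow: "x ^ r \<le> 10/9 * rho * (5/6) ^ (a div 10)" .
  have "real L * real a * (real (a + b choose a) * real (c + e choose c))
      \<le> real L * real a * (real (L choose (a + c)) * x ^ r)"
    using choose_mult_choose_le_pow[OF r_le assms(1), of b c e] pos
    by (intro mult_left_mono) (auto simp: L_def x_def)
  also have "\<dots> \<le> real L * real a * (real (L choose (a + c)) * (10/9 * rho * (5/6) ^ (a div 10)))"
    using x_pow pos by (intro mult_left_mono) auto
  also have "\<dots> = 10/9 * real (a + b) * real (a + c) * real (L choose (a + c)) * (5/6) ^ (a div 10)"
    using pos by (simp add: rho_def)
  finally show ?thesis by (simp add: L_def)
qed

text \<open>The summands of Vandermonde's identity for \<open>(a + b + c + e) choose (a + c)\<close>, indexed by the
  shift \<open>u\<close> from the index \<open>a\<close>.\<close>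

definition vandermonde_term :: "nat \<Rightarrow> nat \<Rightarrow> nat \<Rightarrow> nat \<Rightarrow> nat \<Rightarrow> real" where
  "vandermonde_term a b c e u = real (a + b choose (a + u)) * real (c + e choose (c - u))"

lemma vandermonde_term_Suc:
  assumes "u < b" "u < c"
  shows "vandermonde_term a b c e (Suc u) * (real (a + u + 1) * real (e + u + 1))
    = vandermonde_term a b c e u * (real (b - u) * real (c - u))"
proof -
  have left: "(a + b choose (a + Suc u)) * (a + u + 1) = (a + b choose (a + u)) * (b - u)"
    using Suc_times_choose_Suc[of "a + u" "a + b"] by (simp add: mult.commute)
  have right: "(c + e choose (c - Suc u)) * (e + u + 1) = (c + e choose (c - u)) * (c - u)"
    using Suc_times_choose_Suc[of "c - Suc u" "c + e"] assms
    by (simp add: Suc_diff_Suc mult.commute)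
  have "(a + b choose (a + Suc u)) * (c + e choose (c - Suc u)) * ((a + u + 1) * (e + u + 1))
      = ((a + b choose (a + Suc u)) * (a + u + 1)) * ((c + e choose (c - Suc u)) * (e + u + 1))"
    by (simp only: ac_simps)
  also have "\<dots> = (a + b choose (a + u)) * (c + e choose (c - u)) * ((b - u) * (c - u))"
    unfolding left right by (simp only: ac_simps)
  finally have "(a + b choose (a + Suc u)) * (c + e choose (c - Suc u)) * ((a + u + 1) * (e + u + 1))
      = (a + b choose (a + u)) * (c + e choose (c - u)) * ((b - u) * (c - u))" .
  then show ?thesis
    unfolding vandermonde_term_def by (metis of_nat_mult)
qed

lemma shifted_ratio_lower_bound:
  fixes a b c e t u :: real
  assumes t: "0 < t" "t \<le> a" "t \<le> b" "t \<le> c" "t \<le> e" and u: "0 \<le> u" "u + 1 \<le> t"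
    and "a * e \<le> b * c"
  shows "(1 - 4 * (u + 1) / t) * ((a + u + 1) * (e + u + 1)) \<le> (b - u) * (c - u)"
proof -
  define y where "y = (u + 1) / t"
  have y: "0 \<le> y" "y \<le> 1" "u + 1 = y * t"
    using t u by (auto simp: y_def divide_le_eq)
  have "y * t \<le> y * a" "y * t \<le> y * b" "y * t \<le> y * c" "y * t \<le> y * e"
    using t y(1) by (simp_all add: mult_left_mono)
  then have bounds: "b * (1 - y) \<le> b - u" "c * (1 - y) \<le> c - u"
      "a + u + 1 \<le> a * (1 + y)" "e + u + 1 \<le> e * (1 + y)"
    using t y(3) by (auto simp: algebra_simps)
  have "0 \<le> b * (1 - y)" "0 \<le> c * (1 - y)"
    using t y by simp_all
  then have upper: "(b * (1 - y)) * (c * (1 - y)) \<le> (b - u) * (c - u)"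
    using bounds by (intro mult_mono) auto
  have "4 * (u + 1) / t = 4 * y" by (simp add: y_def)
  moreover have "(1 - 4 * y) * ((a + u + 1) * (e + u + 1)) \<le> (b * (1 - y)) * (c * (1 - y))"
  proof (cases "1 - 4 * y \<le> 0")
    case True
    then have "(1 - 4 * y) * ((a + u + 1) * (e + u + 1)) \<le> 0"
      using t u by (intro mult_nonpos_nonneg) auto
    also have "0 \<le> (b * (1 - y)) * (c * (1 - y))"
      using t y by simp
    finally show ?thesis .
  next
    case False
    have cubic: "(1 - 4 * y) * (1 + y)^2 \<le> (1 - y)^2"
      using y by (simp add: power2_eq_square algebra_simps)
    have "(1 - 4 * y) * ((a + u + 1) * (e + u + 1)) \<le> (1 - 4 * y) * ((a * (1 + y)) * (e * (1 + y)))"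
      using False bounds t u by (intro mult_left_mono mult_mono) auto
    also have "\<dots> = (a * e) * ((1 - 4 * y) * (1 + y)^2)"
      by (simp add: power2_eq_square algebra_simps)
    also have "\<dots> \<le> (a * e) * (1 - y)^2"
      using cubic t by (intro mult_left_mono) auto
    also have "\<dots> \<le> (b * c) * (1 - y)^2"
      using assms(8) by (intro mult_right_mono) auto
    also have "\<dots> = (b * (1 - y)) * (c * (1 - y))"
      by (simp add: power2_eq_square algebra_simps)
    finally show ?thesis .
  qed
  ultimately show ?thesis
    using upper by simp
qed

lemma vandermonde_term_Suc_ge:
  assumes t: "t \<le> a" "t \<le> b" "t \<le> c" "t \<le> e" and "a * e \<le> b * c" and "u + 1 < t"
  shows "vandermonde_term a b c e u * (1 - 4 * (real u + 1) / real t) \<le> vandermonde_term a b c e (Suc u)"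
proof -
  have casts: "real (a + u + 1) = real a + real u + 1" "real (e + u + 1) = real e + real u + 1"
    "real (b - u) = real b - real u" "real (c - u) = real c - real u"
    using assms by auto
  have "real (a * e) \<le> real (b * c)"
    using assms(5) by (simp only: of_nat_le_iff)
  then have ratio: "(1 - 4 * (real u + 1) / real t) * (real (a + u + 1) * real (e + u + 1))
      \<le> real (b - u) * real (c - u)"
    unfolding casts using assms by (intro shifted_ratio_lower_bound) auto
  have "vandermonde_term a b c e u * (1 - 4 * (real u + 1) / real t) * (real (a + u + 1) * real (e + u + 1))
      \<le> vandermonde_term a b c e u * (real (b - u) * real (c - u))"
    using mult_left_mono[OF ratio, of "vandermonde_term a b c e u"]
    by (simp add: vandermonde_term_def mult.assoc)
  also have "\<dots> = vandermonde_term a b c e (Suc u) * (real (a + u + 1) * real (e + u + 1))"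
    using vandermonde_term_Suc[of u b c a e] assms by simp
  finally show ?thesis
    by (simp add: mult_le_cancel_right del: of_nat_add)
qed

lemma vandermonde_term_ge:
  assumes t: "t \<le> a" "t \<le> b" "t \<le> c" "t \<le> e" and ae: "a * e \<le> b * c"
    and "4 * u * (u + 1) \<le> t"
  shows "vandermonde_term a b c e 0 * (1 - 2 * real u * (real u + 1) / real t) \<le> vandermonde_term a b c e u"
  using assms(6)
proof (induction u)
  case 0
  then show ?case by simp
next
  case (Suc u)
  define x where "x = 2 * real u * (real u + 1) / real t"
  define y where "y = 4 * (real u + 1) / real t"
  have "4 * (u + 1) + 4 * u * (u + 1) \<le> t"
    using Suc.prems by (simp add: algebra_simps)
  then have lt: "u + 1 < t" and "4 * (u + 1) \<le> t"
    and IH: "vandermonde_term a b c e 0 * (1 - x) \<le> vandermonde_term a b c e u"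
    using Suc by (auto simp: x_def)
  then have "real (4 * (u + 1)) \<le> real t"
    by (simp only: of_nat_le_iff)
  then have y_le: "y \<le> 1" and x_nonneg: "0 \<le> x" and y_nonneg: "0 \<le> y"
    using lt by (auto simp: y_def x_def divide_le_eq)
  have t0: "vandermonde_term a b c e 0 \<ge> 0"
    by (simp add: vandermonde_term_def)
  have "1 - 2 * real (Suc u) * (real (Suc u) + 1) / real t = 1 - x - y"
    using lt by (simp add: x_def y_def field_simps)
  also have "\<dots> \<le> (1 - x) * (1 - y)"
    using mult_nonneg_nonneg[OF x_nonneg y_nonneg] by (simp add: algebra_simps)
  finally have "vandermonde_term a b c e 0 * (1 - 2 * real (Suc u) * (real (Suc u) + 1) / real t)
      \<le> (vandermonde_term a b c e 0 * (1 - x)) * (1 - y)"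
    using t0 by (simp add: mult_left_mono mult.assoc)
  also have "\<dots> \<le> vandermonde_term a b c e u * (1 - y)"
    using IH y_le by (intro mult_right_mono) auto
  also have "\<dots> \<le> vandermonde_term a b c e (Suc u)"
    unfolding y_def by (rule vandermonde_term_Suc_ge[OF t ae lt])
  finally show ?case .
qed

text \<open>Below the mode (\<open>a e \<le> b c\<close>) the Vandermonde terms with indices \<open>a, \<dots>, a + s\<close> are each at
  least half the first one, and together they are at most the whole Vandermonde sum.\<close>

lemma choose_mult_choose_anticoncentration_below_mode:
  assumes t: "t \<le> a" "t \<le> b" "t \<le> c" "t \<le> e" and ae: "a * e \<le> b * c"
    and s: "4 * s * (s + 1) \<le> t"
  shows "real (s + 1) * (real (a + b choose a) * real (c + e choose c))
    \<le> 2 * real (a + b + c + e choose (a + c))"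
proof -
  have half: "vandermonde_term a b c e 0 / 2 \<le> vandermonde_term a b c e u" if "u \<le> s" for u
  proof -
    have "4 * u * (u + 1) \<le> 4 * s * (s + 1)"
      using that by (intro mult_mono) auto
    then have u_le: "4 * u * (u + 1) \<le> t"
      using s by linarith
    then have "real (4 * u * (u + 1)) \<le> real t"
      by (simp only: of_nat_le_iff)
    then have "2 * real u * (real u + 1) / real t \<le> 1/2"
      by (cases "t = 0") (auto simp: divide_le_eq algebra_simps)
    then have "1/2 \<le> 1 - 2 * real u * (real u + 1) / real t"
      by linarith
    then have "vandermonde_term a b c e 0 * (1/2)
        \<le> vandermonde_term a b c e 0 * (1 - 2 * real u * (real u + 1) / real t)"
      by (intro mult_left_mono) (auto simp: vandermonde_term_def)
    then show ?thesis
      using vandermonde_term_ge[OF t ae u_le] by linarith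
  qed
  have "s \<le> 4 * s * (s + 1)"
    by simp
  then have s_le: "s \<le> c"
    using s t(3) by linarith
  have "real (s + 1) * (vandermonde_term a b c e 0 / 2) \<le> (\<Sum>u\<le>s. vandermonde_term a b c e u)"
    using sum_mono[of "{..s}" "\<lambda>_. vandermonde_term a b c e 0 / 2", OF half] by simp
  also have "\<dots> = (\<Sum>x\<in>(\<lambda>u. a + u) ` {..s}. real (a + b choose x) * real (c + e choose (a + c - x)))"
    by (subst sum.reindex) (auto simp: inj_on_def vandermonde_term_def)
  also have "\<dots> \<le> (\<Sum>x\<le>a + c. real (a + b choose x) * real (c + e choose (a + c - x)))"
    using s_le by (intro sum_mono2) auto
  also have "\<dots> = real (a + b + c + e choose (a + c))"
    using vandermonde[of "a + b" "c + e" "a + c"] by (simp flip: of_nat_mult of_nat_sum add: add.assoc)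
  finally show ?thesis
    by (simp add: vandermonde_term_def)
qed

lemma choose_mult_choose_anticoncentration:
  assumes "t \<le> a" "t \<le> b" "t \<le> c" "t \<le> e" and "4 * s * (s + 1) \<le> t"
  shows "real (s + 1) * (real (a + b choose a) * real (c + e choose c))
    \<le> 2 * real (a + b + c + e choose (a + c))"
proof (cases "a * e \<le> b * c")
  case True
  then show ?thesis
    using choose_mult_choose_anticoncentration_below_mode assms by blast
next
  case False
  then have "real (s + 1) * (real (b + a choose b) * real (e + c choose e))
      \<le> 2 * real (b + a + e + c choose (b + e))"
    using assms by (intro choose_mult_choose_anticoncentration_below_mode[of t]) (auto simp: mult.commute)
  moreover have "(b + a choose b) = (a + b choose a)" "(e + c choose e) = (c + e choose c)"
    using choose_add_swap[of a b] choose_add_swap[of c e] by (simp_all add: add.commute)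
  moreover have "(b + a + e + c choose (b + e)) = (a + b + c + e choose (a + c))"
    using choose_add_swap[of "a + c" "b + e"] by (simp add: ac_simps)
  ultimately show ?thesis
    by simp
qed

section \<open>The growth function and the potential\<close>

text \<open>The shift by 24 makes it 1 below \<open>2\<^sup>3\<^sup>1\<close>, and the divisor 48
  makes it grow slowly enough for \<open>growth_le_growth_mult_pow\<close>.\<close>

definition growth :: "nat \<Rightarrow> real" where
  "growth m = 2 ^ ((floor_log m - 24)\<^sup>2 div 48)"

lemma growth_ge_1: "1 \<le> growth m"
  by (simp add: growth_def)

lemma growth_pos: "0 < growth m"
  by (simp add: growth_def)

lemma growth_0: "growth 0 = 1"
  by (simp add: growth_def)

lemma growth_eq_1: "floor_log m \<le> 30 \<Longrightarrow> growth m = 1"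
proof -
  assume "floor_log m \<le> 30"
  then have "(floor_log m - 24)\<^sup>2 \<le> 6\<^sup>2"
    by (intro power_mono) auto
  then show ?thesis
    by (simp add: growth_def)
qed

lemma floor_log_ge_31_if_growth_gt_1: "1 < growth d \<Longrightarrow> 31 \<le> floor_log d"
  using growth_eq_1[of d] by force

lemma growth_le_pow: "growth d \<le> 2 ^ (floor_log d)\<^sup>2"
proof -
  have "(floor_log d - 24)\<^sup>2 \<le> (floor_log d)\<^sup>2"
    by (intro power_mono) simp_all
  then have "(floor_log d - 24)\<^sup>2 div 48 \<le> (floor_log d)\<^sup>2"
    using div_le_dividend le_trans by blast
  then show ?thesis
    unfolding growth_def by (intro power_increasing) simp_all
qed

lemma pow2_floor_log_le: "d \<noteq> 0 \<Longrightarrow> k \<le> floor_log d \<Longrightarrow> 2 ^ k * 2 ^ (floor_log d - k) \<le> d"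
  using floor_log_exp2_le[of d] by (simp flip: power_add)

lemma pow2_ge_square: "40 * (n\<^sup>2 + 2) \<le> (2::nat) ^ (n - 2)" if "31 \<le> n"
proof -
  have "40 * ((k + 31)\<^sup>2 + 2) \<le> (2::nat) ^ (k + 29)" for k
  proof (induction k)
    case 0
    then show ?case by simp
  next
    case (Suc k)
    have "40 * ((Suc k + 31)\<^sup>2 + 2) \<le> 2 * (40 * ((k + 31)\<^sup>2 + 2))"
      by (simp add: power2_eq_square algebra_simps)
    also have "\<dots> \<le> 2 * 2 ^ (k + 29)"
      using Suc.IH by simp
    also have "\<dots> = 2 ^ (Suc k + 29)"
      by (simp only: add_Suc power_Suc)
    finally show ?case .
  qed
  from this[of "n - 31"] that show ?thesis
    by simp
qed

lemma pow_mult_growth_le_half: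
  assumes "1 < growth d" "d \<le> 4 * a"
  shows "(5/6::real) ^ (a div 10) * growth d \<le> 1/2"
proof -
  define l where "l = floor_log d"
  have l31: "31 \<le> l"
    using floor_log_ge_31_if_growth_gt_1 assms(1) by (simp add: l_def)
  then have "d \<noteq> 0"
    by (cases "d = 0") (auto simp: l_def)
  then have "2 ^ 2 * 2 ^ (l - 2) \<le> 4 * a"
    using pow2_floor_log_le[of d 2] assms(2) l31 by (simp add: l_def)
  then have "40 * (l\<^sup>2 + 2) \<le> a"
    using pow2_ge_square[OF l31] by simp
  then have q: "l\<^sup>2 + 1 \<le> a div 40"
    by (simp add: less_eq_div_iff_mult_less_eq)
  have "4 * (a div 40) \<le> a div 10"
    using div_mult2_eq[of a 10 4] times_div_less_eq_dividend[of "a div 10" 4] by (simp add: mult.commute)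
  then have "(5/6::real) ^ (a div 10) \<le> ((5/6) ^ 4) ^ (a div 40)"
    by (simp add: power_mult[symmetric] power_decreasing)
  also have "\<dots> \<le> (1/2) ^ (a div 40)"
    by (intro power_mono) (simp_all add: power_divide)
  also have "\<dots> \<le> (1/2) ^ (l\<^sup>2 + 1)"
    using q by (intro power_decreasing) simp_all
  finally have "(5/6::real) ^ (a div 10) * growth d \<le> (1/2) ^ (l\<^sup>2 + 1) * 2 ^ l\<^sup>2"
    using growth_le_pow[of d] growth_pos[of d] by (intro mult_mono) (auto simp: l_def)
  also have "\<dots> = 1/2"
    by (simp add: power_add power_one_over)
  finally show ?thesis .
qed

lemma add_div_le: "(A + B) div (m::nat) \<le> A div m + B div m + 1"
proof (cases "m = 0")
  case False
  have "A mod m + B mod m < 2 * m"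
    using mod_less_divisor[of m A] mod_less_divisor[of m B] False by linarith
  then have "(A mod m + B mod m) div m < 2"
    by (intro less_mult_imp_div_less) (simp add: mult.commute)
  then show ?thesis
    using div_add1_eq[of A B m] by linarith
qed simp

lemma growth_le_growth_mult_pow:
  assumes "1 < growth d" "d \<le> 8 * m"
  shows "growth d \<le> growth m * 2 ^ (floor_log d div 8 + 1)"
proof -
  define l where "l = floor_log d"
  have l31: "31 \<le> l"
    using floor_log_ge_31_if_growth_gt_1 assms(1) by (simp add: l_def)
  then have "d \<noteq> 0"
    by (cases "d = 0") (auto simp: l_def)
  then have "2 ^ 3 * 2 ^ (l - 3) \<le> 8 * m"
    using pow2_floor_log_le[of d 3] assms(2) l31 by (simp add: l_def)
  then have "floor_log (2 ^ (l - 3)) \<le> floor_log m"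
    by (intro floor_log_le_iff) simp
  then have "l - 27 \<le> floor_log m - 24"
    by simp
  then have "(l - 27)\<^sup>2 \<le> (floor_log m - 24)\<^sup>2"
    by (rule power_mono) simp
  moreover have "(l - 24)\<^sup>2 \<le> (l - 27)\<^sup>2 + 6 * l"
  proof -
    define y where "y = l - 27"
    have "l = y + 27"
      using l31 by (simp add: y_def)
    then show ?thesis
      by (simp add: power2_eq_square algebra_simps)
  qed
  ultimately have "(l - 24)\<^sup>2 div 48 \<le> ((floor_log m - 24)\<^sup>2 + 6 * l) div 48"
    by (intro div_le_mono) linarith
  also have "\<dots> \<le> (floor_log m - 24)\<^sup>2 div 48 + (l div 8 + 1)"
    using add_div_le[of "(floor_log m - 24)\<^sup>2" "6 * l" 48] by simp
  finally have "(2::real) ^ ((l - 24)\<^sup>2 div 48) \<le> 2 ^ ((floor_log m - 24)\<^sup>2 div 48 + (l div 8 + 1))"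
    by (intro power_increasing) simp_all
  then show ?thesis
    unfolding growth_def l_def power_add .
qed

text \<open>The width \<open>s + 1 = 2\<^bsup>\<lfloor>log d\<rfloor> div 2 - 3\<^esup>\<close> is about \<open>\<surd>d / 8\<close>: small enough for anticoncentration
  in parts of size \<open>d / 8\<close>, large enough to pay for the loss \<open>2\<^bsup>log d / 8 + 1\<^esup>\<close> in the growth.\<close>

lemma anticoncentration_parameter:
  assumes "1 < growth d" "d \<le> 8 * t" "t \<le> m"
  obtains s where "4 * s * (s + 1) \<le> t" "8/3 * growth d \<le> growth m * real (s + 1)"
proof
  define l where "l = floor_log d"
  define s where "s = 2 ^ (l div 2 - 3) - (1::nat)"
  have l31: "31 \<le> l"
    using floor_log_ge_31_if_growth_gt_1 assms(1) by (simp add: l_def)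
  have s1: "s + 1 = 2 ^ (l div 2 - 3)"
    by (simp add: s_def)
  have "d \<noteq> 0"
    using l31 by (cases "d = 0") (auto simp: l_def)
  then have "8 * 2 ^ (l - 3) \<le> d"
    using pow2_floor_log_le[of d 3] l31 by (simp add: l_def)
  then have pow_le_t: "2 ^ (l - 3) \<le> t"
    using assms(2) by linarith
  have "4 * s * (s + 1) \<le> 4 * (s + 1) * (s + 1)"
    by (intro mult_le_mono) auto
  also have "\<dots> = 2 ^ (2 + (l div 2 - 3) + (l div 2 - 3))"
    unfolding s1 power_add by simp
  also have "\<dots> \<le> 2 ^ (l - 3)"
    using l31 by (intro power_increasing) auto
  also note pow_le_t
  finally show "4 * s * (s + 1) \<le> t" .
  have "growth d \<le> growth m * 2 ^ (l div 8 + 1)"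
    using growth_le_growth_mult_pow[OF assms(1), of m] assms(2,3) by (simp add: l_def)
  then have "8/3 * growth d \<le> growth m * (8/3 * 2 ^ (l div 8 + 1))"
    by simp
  also have "8/3 * 2 ^ (l div 8 + 1) \<le> (2::real) ^ (l div 8 + 3)"
    by (simp add: power_add)
  also have "\<dots> \<le> 2 ^ (l div 2 - 3)"
    using l31 by (intro power_increasing) auto
  also have "\<dots> = real (s + 1)"
    unfolding s1 by simp
  finally show "8/3 * growth d \<le> growth m * real (s + 1)"
    using growth_pos[of m] by (simp add: mult_left_mono)
qed

text \<open>\<open>potential L d\<close> is the lower bound on the number of leaves of an expression for the words
  of length \<open>L\<close> and weight \<open>d\<close> that the induction below establishes.\<close>

definition potential :: "nat \<Rightarrow> nat \<Rightarrow> real" where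
  "potential L d = (if min d (L - d) = 0 then 1
     else real L * growth (min d (L - d)) / real (min d (L - d)))"

lemma potential_nonneg: "0 \<le> potential L d"
  by (simp add: potential_def growth_pos less_imp_le)

lemma potential_diff:
  assumes "d \<le> L"
  shows "potential L (L - d) = potential L d"
proof -
  have "min (L - d) (L - (L - d)) = min d (L - d)"
    using assms by simp
  then show ?thesis
    unfolding potential_def by (simp only:)
qed

lemma potential_add_ge:
  assumes "1 \<le> a"
  shows "real (a + b) * growth (min a b) / real a \<le> potential (a + b) a"
proof (cases "b = 0")
  case True
  then show ?thesis
    using assms by (simp add: potential_def growth_0)
next
  case False
  then have "min a (a + b - a) = min a b" "min a b \<noteq> 0"
    using assms by auto
  then have "potential (a + b) a = real (a + b) * growth (min a b) / real (min a b)"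
    unfolding potential_def by (simp only: if_False)
  moreover have "real (a + b) * growth (min a b) / real a
      \<le> real (a + b) * growth (min a b) / real (min a b)"
    using False assms growth_pos[of "min a b"] by (intro divide_left_mono) auto
  ultimately show ?thesis
    by simp
qed

section \<open>The splitting inequality\<close>

lemma choose_mult_choose_markov:
  assumes "1 \<le> a"
  shows "real (a + b + c + e) * real a * (real (a + b choose a) * real (c + e choose c))
    \<le> real (a + b) * real (a + c) * real (a + b + c + e choose (a + c))"
proof -
  define N where "N = real (a + b) * real (a + c)"
  define M where "M = real (a + b + c + e) * real a"
  have "0 < M"
    using assms by (simp add: M_def)
  have "M * (real (a + b choose a) * real (c + e choose c))
      \<le> M * (real (a + b + c + e choose (a + c)) * (N / M))"
    using choose_mult_choose_le_pow[of 1 a b c e] assms \<open>0 < M\<close>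
    by (intro mult_left_mono) (simp_all add: N_def M_def)
  also have "\<dots> = N * real (a + b + c + e choose (a + c))"
    using \<open>0 < M\<close> by simp
  finally show ?thesis
    by (simp add: N_def M_def)
qed

lemma splitting_upper_tail:
  fixes a b c e :: nat
  defines "L \<equiv> a + b + c + e" and "d \<equiv> a + c" and "l \<equiv> a + b"
    and "X \<equiv> real (a + b choose a) * real (c + e choose c)"
  assumes "1 < growth d" "1 \<le> a" "c \<le> 3 * a"
    and deviation: "4 * (real l * real d) \<le> 3 * (real L * real a)"
  shows "real L * growth d * real a * X \<le> real l * real d * growth (min a b) * real (L choose d)"
proof -
  have "real L * real a * X \<le> 10/9 * real l * real d * real (L choose d) * (5/6) ^ (a div 10)"
    using choose_mult_choose_le_decay[of a b c e] assms by simp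
  then have "real L * growth d * real a * X
      \<le> 10/9 * real l * real d * real (L choose d) * ((5/6) ^ (a div 10) * growth d)"
    using growth_pos[of d] by (simp add: mult_right_mono mult.commute mult.left_commute)
  also have "\<dots> \<le> 10/9 * real l * real d * real (L choose d) * (1/2)"
    using pow_mult_growth_le_half[of d a] assms by (intro mult_left_mono) auto
  also have "\<dots> \<le> real l * real d * real (L choose d) * 1"
    by simp
  also have "\<dots> \<le> real l * real d * real (L choose d) * growth (min a b)"
    by (rule mult_left_mono[OF growth_ge_1]) simp
  finally show ?thesis
    by (simp only: ac_simps)
qed

lemma choose_mult_choose_le_decay_complement:
  assumes "a < c" "2 * e \<le> c" "2 * (a + c) \<le> a + b + c + e"
  shows "real (a + b choose a) * real (c + e choose c)
    \<le> real (a + b + c + e choose (a + c)) * (5/6) ^ (a div 10)"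
proof -
  define P where "P = real (c + e + a + b) * real c"
  define K where "K = real (c + e + a + b choose (c + a)) * (5/6) ^ (c div 10)"
  have "0 < P"
    using assms(1) by (simp add: P_def)
  have "2 * real (c + e) \<le> 3 * real c" "2 * real (c + a) \<le> real (c + e + a + b)"
    using assms(2,3) by simp_all
  then have "(2 * real (c + e)) * (2 * real (c + a)) \<le> (3 * real c) * real (c + e + a + b)"
    by (rule mult_mono) simp_all
  moreover have "(2 * real (c + e)) * (2 * real (c + a)) = 4 * (real (c + e) * real (c + a))"
    "(3 * real c) * real (c + e + a + b) = 3 * P"
    by (simp_all only: P_def mult_ac)
  ultimately have deviation: "4 * (real (c + e) * real (c + a)) \<le> 3 * P"
    by linarith
  have "P * (real (c + e choose c) * real (a + b choose a)) \<le> 10/9 * (real (c + e) * real (c + a)) * K"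
    using choose_mult_choose_le_decay[of c e a b] assms(1) deviation
    unfolding P_def K_def by (simp only: mult.assoc)
  also have "\<dots> \<le> 10/9 * (3/4 * P) * K"
  proof -
    have "real (c + e) * real (c + a) \<le> 3/4 * P"
      using deviation by linarith
    then show ?thesis
      by (intro mult_right_mono mult_left_mono) (simp_all add: K_def)
  qed
  finally have "real (c + e choose c) * real (a + b choose a) \<le> 5/6 * K"
    using \<open>0 < P\<close> by (simp add: mult_le_cancel_left_pos)
  also have "\<dots> = real (c + e + a + b choose (c + a)) * (5/6) ^ Suc (c div 10)"
    by (simp add: K_def)
  also have "\<dots> \<le> real (c + e + a + b choose (c + a)) * (5/6) ^ (a div 10)"
    using assms(1) div_le_mono[of a c 10] by (intro mult_left_mono power_decreasing) auto
  finally show ?thesis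
    by (simp add: ac_simps)
qed

lemma splitting_complement_tail:
  fixes a b c e :: nat
  defines "L \<equiv> a + b + c + e" and "d \<equiv> a + c" and "l \<equiv> a + b"
    and "X \<equiv> real (a + b choose a) * real (c + e choose c)"
  assumes "1 < growth d" "a < c" "c \<le> 3 * a" "2 * e \<le> c" "2 * d \<le> L"
    and concentration: "3 * (real L * real a) < 4 * (real l * real d)"
  shows "real L * growth d * real a * X \<le> real l * real d * growth (min a b) * real (L choose d)"
proof -
  have "real L * growth d * real a * X = (real L * real a) * (growth d * X)"
    by (simp only: ac_simps)
  also have "\<dots> \<le> (4/3 * (real l * real d)) * (growth d * X)"
    using concentration growth_pos[of d] by (intro mult_right_mono) (simp_all add: X_def)
  also have "\<dots> \<le> (4/3 * (real l * real d)) * (growth d * (real (L choose d) * (5/6) ^ (a div 10)))"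
    using choose_mult_choose_le_decay_complement[of a c e b] assms growth_pos[of d]
    by (intro mult_left_mono) (simp_all add: X_def L_def d_def)
  also have "\<dots> = 4/3 * real l * real d * real (L choose d) * ((5/6) ^ (a div 10) * growth d)"
    by (simp only: ac_simps)
  also have "\<dots> \<le> 4/3 * real l * real d * real (L choose d) * (1/2)"
    using pow_mult_growth_le_half[of d a] assms by (intro mult_left_mono) auto
  also have "\<dots> \<le> real l * real d * real (L choose d) * 1"
    by simp
  also have "\<dots> \<le> real l * real d * real (L choose d) * growth (min a b)"
    by (rule mult_left_mono[OF growth_ge_1]) simp
  finally show ?thesis
    by (simp only: ac_simps)
qed

lemma balanced_le_min:
  fixes a b c e :: nat
  defines "L \<equiv> a + b + c + e" and "d \<equiv> a + c" and "l \<equiv> a + b"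
  assumes "a < c" "c \<le> 3 * a" "c < 2 * e" "2 * d \<le> L"
    and concentration: "3 * (real L * real a) < 4 * (real l * real d)"
  shows "d \<le> 8 * min (min a b) (min c e)"
proof -
  have "a < 2 * b"
  proof (rule ccontr)
    assume "\<not> a < 2 * b"
    then have "2 * real l \<le> 3 * real a" "2 * real d \<le> real L"
      using assms(7) by (simp_all add: l_def)
    then have "(2 * real l) * (2 * real d) \<le> (3 * real a) * real L"
      by (rule mult_mono) simp_all
    moreover have "(2 * real l) * (2 * real d) = 4 * (real l * real d)"
      "(3 * real a) * real L = 3 * (real L * real a)"
      by simp_all
    ultimately show False
      using concentration by linarith
  qed
  then show ?thesis
    using assms(4-6) by (simp add: d_def)
qed

lemma splitting_balanced:
  fixes a b c e :: nat
  defines "L \<equiv> a + b + c + e" and "d \<equiv> a + c" and "l \<equiv> a + b"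
    and "X \<equiv> real (a + b choose a) * real (c + e choose c)"
  assumes "1 < growth d" "a < c" "c \<le> 3 * a" "c < 2 * e" "2 * d \<le> L"
    and concentration: "3 * (real L * real a) < 4 * (real l * real d)"
  shows "real L * growth d * real a * X \<le> real l * real d * growth (min a b) * real (L choose d)"
proof -
  define t where "t = min (min a b) (min c e)"
  have "d \<le> 8 * t"
    using balanced_le_min[of a c e b] assms(6-10) by (simp add: t_def L_def d_def l_def)
  moreover have "t \<le> min a b"
    unfolding t_def by (rule min.cobounded1)
  ultimately obtain s where s: "4 * s * (s + 1) \<le> t"
    and growth_le: "8/3 * growth d \<le> growth (min a b) * real (s + 1)"
    using anticoncentration_parameter[OF assms(5)] by blast
  have anti: "real (s + 1) * X \<le> 2 * real (L choose d)"
    using choose_mult_choose_anticoncentration[of t a b c e s] s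
    by (simp add: t_def X_def L_def d_def)
  have "real L * growth d * real a * X = (real L * real a) * (growth d * X)"
    by (simp only: ac_simps)
  also have "\<dots> \<le> (4/3 * (real l * real d)) * (growth d * X)"
    using concentration growth_pos[of d] by (intro mult_right_mono) (simp_all add: X_def)
  also have "\<dots> = real l * real d * (8/3 * growth d) * X / 2"
    by simp
  also have "\<dots> \<le> real l * real d * (growth (min a b) * real (s + 1)) * X / 2"
    using growth_le by (intro divide_right_mono mult_right_mono mult_left_mono) (simp_all add: X_def)
  also have "\<dots> = real l * real d * growth (min a b) * (real (s + 1) * X) / 2"
    by (simp only: ac_simps)
  also have "\<dots> \<le> real l * real d * growth (min a b) * (2 * real (L choose d)) / 2"
    using anti growth_pos[of "min a b"] by (intro divide_right_mono mult_left_mono) simp_all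
  finally show ?thesis
    by simp
qed

text \<open>If the growth does not drop, Markov's inequality suffices. Otherwise \<open>a\<close> exceeds the mean
  \<open>l d / L\<close> by a constant factor, or the ones outside the factor outnumber the zeros there by a
  constant factor, and a tail bound applies; or all four parts are comparable and anticoncentration
  applies.\<close>

lemma splitting_growth_bound:
  fixes a b c e :: nat
  defines "L \<equiv> a + b + c + e" and "d \<equiv> a + c" and "l \<equiv> a + b"
    and "X \<equiv> real (a + b choose a) * real (c + e choose c)"
  assumes "a + c \<le> b + e" "a < c" "c \<le> 3 * a"
  shows "real L * growth d * real a * X \<le> real l * real d * growth (min a b) * real (L choose d)"
proof (cases "growth d \<le> growth (min a b)")
  case True
  have "real L * real a * X \<le> real l * real d * real (L choose d)"
    unfolding L_def d_def l_def X_def using assms(6,7) by (intro choose_mult_choose_markov) simp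
  then have "growth d * (real L * real a * X) \<le> growth (min a b) * (real l * real d * real (L choose d))"
    by (rule mult_mono[OF True]) (simp_all add: X_def growth_pos less_imp_le)
  then show ?thesis
    by (simp only: ac_simps)
next
  case False
  then have "1 < growth d"
    using growth_ge_1[of "min a b"] by linarith
  have "2 * d \<le> L"
    using assms(5) by (simp add: L_def d_def)
  consider (upper_tail) "4 * (real l * real d) \<le> 3 * (real L * real a)"
    | (complement_tail) "3 * (real L * real a) < 4 * (real l * real d)" "2 * e \<le> c"
    | (balanced) "3 * (real L * real a) < 4 * (real l * real d)" "c < 2 * e"
    by linarith
  then show ?thesis
  proof cases
    case upper_tail
    show ?thesis
      unfolding L_def d_def l_def X_def
      by (rule splitting_upper_tail) (use upper_tail assms \<open>1 < growth d\<close> in \<open>simp_all add: L_def d_def l_def\<close>)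
  next
    case complement_tail
    show ?thesis
      unfolding L_def d_def l_def X_def
      by (rule splitting_complement_tail)
        (use complement_tail assms \<open>1 < growth d\<close> \<open>2 * d \<le> L\<close> in \<open>simp_all add: L_def d_def l_def\<close>)
  next
    case balanced
    show ?thesis
      unfolding L_def d_def l_def X_def
      by (rule splitting_balanced)
        (use balanced assms \<open>1 < growth d\<close> \<open>2 * d \<le> L\<close> in \<open>simp_all add: L_def d_def l_def\<close>)
  qed
qed

lemma splitting_inequality:
  assumes "a + c \<le> b + e" "a < c" "c \<le> 3 * a"
  shows "potential (a + b + c + e) (a + c) * (real (a + b choose a) * real (c + e choose c))
    \<le> potential (a + b) a * real (a + b + c + e choose (a + c))"
proof -
  define L d l where "L = a + b + c + e" and "d = a + c" and "l = a + b"
  define X CL where "X = real (a + b choose a) * real (c + e choose c)" and "CL = real (L choose d)"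
  have pos: "0 < real a" "0 < real d" and "min d (L - d) = d"
    using assms by (simp_all add: L_def d_def)
  then have "potential L d = real L * growth d / real d"
    unfolding potential_def by simp
  then have "potential L d * X = (real L * growth d * real a * X) / (real a * real d)"
    using pos by (simp add: field_simps)
  also have "\<dots> \<le> (real l * real d * growth (min a b) * CL) / (real a * real d)"
    using splitting_growth_bound[OF assms]
    by (intro divide_right_mono) (simp_all add: L_def d_def l_def X_def CL_def)
  also have "\<dots> = (real l * growth (min a b) / real a) * CL"
    using pos by (simp add: field_simps)
  also have "\<dots> \<le> potential l a * CL"
    using potential_add_ge[of a b] pos by (intro mult_right_mono) (simp_all add: l_def CL_def)
  finally show ?thesis
    by (simp add: L_def d_def l_def X_def CL_def)
qed

section \<open>Minimum-weight words of regular expressions\<close>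

lemma ones_Nil [simp]: "ones [] = 0"
  and ones_Cons [simp]: "ones (x # w) = (if x then Suc (ones w) else ones w)"
  and ones_append [simp]: "ones (u @ v) = ones u + ones v"
  by (simp_all add: ones_def)

lemma ones_le_length: "ones w \<le> length w"
  by (simp add: ones_def)

definition slice :: "nat \<Rightarrow> nat \<Rightarrow> bool list set" where
  "slice l k = {w. length w = l \<and> ones w = k}"

lemma finite_slice: "finite (slice l k)"
  by (rule finite_subset[OF _ finite_lists_length_eq[of UNIV l]]) (auto simp: slice_def)

lemma slice_Suc: "slice (Suc l) k
    = Cons False ` slice l k \<union> (if k = 0 then {} else Cons True ` slice l (k - 1))"
  by (auto simp: slice_def length_Suc_conv image_iff split: if_splits)

lemma card_slice: "card (slice l k) = l choose k"
proof (induction l arbitrary: k)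
  case 0
  have "slice 0 k = (if k = 0 then {[]} else {})"
    by (auto simp: slice_def)
  then show ?case
    by simp
next
  case (Suc l)
  have "card (slice (Suc l) k)
      = card (Cons False ` slice l k) + card (if k = 0 then {} else Cons True ` slice l (k - 1))"
    unfolding slice_Suc by (rule card_Un_disjoint) (auto simp: finite_slice)
  also have "\<dots> = (l choose k) + (if k = 0 then 0 else l choose (k - 1))"
    by (simp add: card_image Suc.IH)
  also have "\<dots> = Suc l choose k"
    by (cases k) simp_all
  finally show ?case .
qed

fun leaves :: "rexp \<Rightarrow> nat" where
  "leaves Eps = 1"
| "leaves (Lit a) = 1"
| "leaves (Union r s) = leaves r + leaves s"
| "leaves (Concat r s) = leaves r + leaves s"

lemma nodes_eq_leaves: "nodes r + 1 = 2 * leaves r"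
  by (induction r) auto

lemma length_le_leaves: "w \<in> lang r \<Longrightarrow> length w \<le> leaves r"
  by (induction r arbitrary: w) fastforce+

lemma lang_nonempty: "lang r \<noteq> {}"
  by (induction r) auto

lemma finite_lang: "finite (lang r)"
proof (induction r)
  case (Concat r s)
  have "lang (Concat r s) = (\<lambda>(u, v). u @ v) ` (lang r \<times> lang s)"
    by auto
  then show ?case
    using Concat by simp
qed auto

fun min_ones :: "rexp \<Rightarrow> nat" where
  "min_ones Eps = 0"
| "min_ones (Lit a) = (if a then 1 else 0)"
| "min_ones (Union r s) = min (min_ones r) (min_ones s)"
| "min_ones (Concat r s) = min_ones r + min_ones s"

lemma min_ones_le: "w \<in> lang r \<Longrightarrow> min_ones r \<le> ones w"
  by (induction r arbitrary: w) fastforce+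

lemma min_ones_attained: "\<exists>w\<in>lang r. ones w = min_ones r"
proof (induction r)
  case (Union r s)
  then show ?case
    by (auto simp: min_def)
next
  case (Concat r s)
  then obtain u v where "u \<in> lang r" "ones u = min_ones r" "v \<in> lang s" "ones v = min_ones s"
    by auto
  then show ?case
    by (intro bexI[of _ "u @ v"]) auto
qed auto

definition min_weight_words :: "rexp \<Rightarrow> bool list set" where
  "min_weight_words r = {w \<in> lang r. ones w = min_ones r}"

lemma card_min_weight_words_Union:
  "card (min_weight_words (Union r s))
    \<le> (if min_ones r = min_ones (Union r s) then card (min_weight_words r) else 0)
      + (if min_ones s = min_ones (Union r s) then card (min_weight_words s) else 0)"
proof -
  have "min_weight_words (Union r s)
      \<subseteq> (if min_ones r = min_ones (Union r s) then min_weight_words r else {})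
        \<union> (if min_ones s = min_ones (Union r s) then min_weight_words s else {})"
  proof
    fix w
    assume w: "w \<in> min_weight_words (Union r s)"
    then have "w \<in> lang r \<or> w \<in> lang s" "ones w = min (min_ones r) (min_ones s)"
      by (auto simp: min_weight_words_def)
    then show "w \<in> (if min_ones r = min_ones (Union r s) then min_weight_words r else {})
        \<union> (if min_ones s = min_ones (Union r s) then min_weight_words s else {})"
      using min_ones_le[of w r] min_ones_le[of w s] by (auto simp: min_weight_words_def min_def)
  qed
  then have "card (min_weight_words (Union r s))
      \<le> card ((if min_ones r = min_ones (Union r s) then min_weight_words r else {})
        \<union> (if min_ones s = min_ones (Union r s) then min_weight_words s else {}))"
    using finite_lang by (intro card_mono) (auto simp: min_weight_words_def)
  also have "\<dots> \<le> card (if min_ones r = min_ones (Union r s) then min_weight_words r else {})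
      + card (if min_ones s = min_ones (Union r s) then min_weight_words s else {})"
    by (rule card_Un_le)
  finally show ?thesis
    by (simp split: if_splits)
qed

lemma card_min_weight_words_Concat:
  "card (min_weight_words (Concat r s)) \<le> card (min_weight_words r) * card (min_weight_words s)"
proof -
  have "min_weight_words (Concat r s) \<subseteq> (\<lambda>(u, v). u @ v) ` (min_weight_words r \<times> min_weight_words s)"
  proof
    fix w
    assume "w \<in> min_weight_words (Concat r s)"
    then obtain u v where w: "w = u @ v" "u \<in> lang r" "v \<in> lang s"
      and "ones u + ones v = min_ones r + min_ones s"
      by (auto simp: min_weight_words_def)
    moreover have "min_ones r \<le> ones u" "min_ones s \<le> ones v"
      using min_ones_le w by auto
    ultimately show "w \<in> (\<lambda>(u, v). u @ v) ` (min_weight_words r \<times> min_weight_words s)"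
      by (auto simp: min_weight_words_def)
  qed
  moreover have fin: "finite (min_weight_words r \<times> min_weight_words s)"
    using finite_lang by (simp add: min_weight_words_def)
  ultimately have "card (min_weight_words (Concat r s))
      \<le> card ((\<lambda>(u, v). u @ v) ` (min_weight_words r \<times> min_weight_words s))"
    by (intro card_mono) simp_all
  also have "\<dots> \<le> card (min_weight_words r \<times> min_weight_words s)"
    using fin by (rule card_image_le)
  finally show ?thesis
    by (simp add: card_cartesian_product)
qed

definition homogeneous :: "rexp \<Rightarrow> nat \<Rightarrow> bool" where
  "homogeneous r l \<longleftrightarrow> (\<forall>w\<in>lang r. length w = l)"

lemma homogeneous_min_ones_le: "homogeneous r l \<Longrightarrow> min_ones r \<le> l"
  using min_ones_attained[of r] ones_le_length unfolding homogeneous_def by metis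

lemma homogeneous_Union: "homogeneous (Union r s) l \<longleftrightarrow> homogeneous r l \<and> homogeneous s l"
  by (auto simp: homogeneous_def)

lemma homogeneous_Concat:
  assumes "homogeneous (Concat r s) l"
  obtains l1 l2 where "homogeneous r l1" "homogeneous s l2" "l = l1 + l2"
proof -
  obtain u0 v0 where u0: "u0 \<in> lang r" and v0: "v0 \<in> lang s"
    using lang_nonempty by blast
  have len: "length u + length v = l" if "u \<in> lang r" "v \<in> lang s" for u v
    using assms that unfolding homogeneous_def by fastforce
  have "homogeneous r (length u0)" "homogeneous s (length v0)"
    unfolding homogeneous_def using len[OF _ v0] len[OF u0] len[OF u0 v0] by fastforce+
  then show ?thesis
    using that len[OF u0 v0] by blast
qed

lemma card_min_weight_words_le:
  assumes "homogeneous r l"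
  shows "card (min_weight_words r) \<le> l choose min_ones r"
proof -
  have "min_weight_words r \<subseteq> slice l (min_ones r)"
    using assms by (auto simp: min_weight_words_def slice_def homogeneous_def)
  then show ?thesis
    using card_mono[OF finite_slice] card_slice by metis
qed

section \<open>The leaf bound\<close>

definition potential_splits :: "nat \<Rightarrow> nat \<Rightarrow> nat \<Rightarrow> nat \<Rightarrow> bool" where
  "potential_splits L d l m \<longleftrightarrow>
     potential L d * (real (l choose m) * real (L - l choose (d - m))) \<le> potential l m * real (L choose d)"

lemma potential_splits_ones:
  assumes "2 * d \<le> L" "d \<le> 4 * m" "2 * m < d" "m \<le> l" "l - m \<le> L - d"
  shows "potential_splits L d l m"
proof -
  have eqs: "m + (l - m) = l" "l + (d - m) + (L - d - (l - m)) = L" "m + (d - m) = d"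
    "d - m + (L - d - (l - m)) = L - l"
    using assms by simp_all
  have "potential (m + (l - m) + (d - m) + (L - d - (l - m))) (m + (d - m))
      * (real (m + (l - m) choose m) * real (d - m + (L - d - (l - m)) choose (d - m)))
      \<le> potential (m + (l - m)) m * real (m + (l - m) + (d - m) + (L - d - (l - m)) choose (m + (d - m)))"
    by (rule splitting_inequality) (use assms in auto)
  then show ?thesis
    unfolding potential_splits_def eqs .
qed

lemma potential_splits_zeros:
  assumes "L \<le> 2 * d" "L - d \<le> 4 * (l - m)" "2 * (l - m) < L - d" "m \<le> l" "m \<le> d" "d \<le> L"
  shows "potential_splits L d l m"
proof -
  have "potential_splits L (L - d) l (l - m)"
    by (rule potential_splits_ones) (use assms in auto)
  moreover have "L - d - (l - m) = (L - l) - (d - m)"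
    using assms by simp
  then have "L - l choose (L - d - (l - m)) = L - l choose (d - m)"
    using binomial_symmetric[of "d - m" "L - l"] assms by (simp only:) simp
  ultimately show ?thesis
    using assms unfolding potential_splits_def
    by (simp add: potential_diff binomial_symmetric[of m l] binomial_symmetric[of d L])
qed

text \<open>A factor of length \<open>l\<close> with \<open>m\<close> ones is heavy for the slice of weight \<open>d\<close> in length \<open>L\<close> if it
  carries at least half of the letters that are in the minority in that slice.\<close>

definition heavy :: "nat \<Rightarrow> nat \<Rightarrow> nat \<Rightarrow> nat \<Rightarrow> bool" where
  "heavy L d l m \<longleftrightarrow> (2 * d \<le> L \<and> d \<le> 2 * m) \<or> (L \<le> 2 * d \<and> L - d \<le> 2 * (l - m))"

lemma heavy_self: "heavy l m l m"
  by (auto simp: heavy_def)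

lemma heavy_or_potential_splits:
  assumes "heavy L d (l1 + l2) (m1 + m2)" "m1 \<le> l1" "m2 \<le> l2" "m1 + m2 \<le> d"
    "l1 + l2 - (m1 + m2) \<le> L - d" "d \<le> L"
  shows "heavy L d l1 m1 \<or> heavy L d l2 m2 \<or> potential_splits L d l1 m1 \<or> potential_splits L d l2 m2"
proof (cases "heavy L d l1 m1 \<or> heavy L d l2 m2")
  case False
  show ?thesis
  proof (cases "2 * d \<le> L \<and> d \<le> 2 * (m1 + m2)")
    case True
    then have "2 * m1 < d" "2 * m2 < d"
      using False by (auto simp: heavy_def)
    then show ?thesis
      using True assms potential_splits_ones[of d L m1 l1] potential_splits_ones[of d L m2 l2]
      by (cases "d \<le> 4 * m1") auto
  next
    case False': False
    then have "L \<le> 2 * d" "L - d \<le> 2 * (l1 - m1) + 2 * (l2 - m2)"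
      using assms by (auto simp: heavy_def)
    moreover have "2 * (l1 - m1) < L - d" "2 * (l2 - m2) < L - d"
      using False calculation(1) by (auto simp: heavy_def)
    ultimately show ?thesis
      using assms potential_splits_zeros[of L d l1 m1] potential_splits_zeros[of L d l2 m2]
      by (cases "L - d \<le> 4 * (l1 - m1)") auto
  qed
qed auto

text \<open>\<open>card (min_weight_words r) * (L - l choose (d - min_ones r))\<close> counts the ways of extending a
  minimum-weight word of \<open>r\<close> to a word of length \<open>L\<close> and weight \<open>d\<close>; the bound says that this is at
  most a \<open>leaves r / potential L d\<close> fraction of the slice.\<close>

definition leaf_bound :: "rexp \<Rightarrow> nat \<Rightarrow> nat \<Rightarrow> nat \<Rightarrow> bool" where
  "leaf_bound r l L d \<longleftrightarrow>
     real (card (min_weight_words r)) * real (L - l choose (d - min_ones r)) * potential L d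
       \<le> real (leaves r) * real (L choose d)"

lemma potential_eq_1: "min d (L - d) = 0 \<Longrightarrow> potential L d = 1"
  by (simp add: potential_def)

lemma potential_small:
  assumes "1 \<le> min d (L - d)" "min d (L - d) \<le> 2"
  shows "potential L d = real L / real (min d (L - d))"
proof -
  have "floor_log (min d (L - d)) \<le> floor_log 2"
    using assms(2) by (rule floor_log_le_iff)
  then have "growth (min d (L - d)) = 1"
    by (intro growth_eq_1) (simp add: floor_log_rec)
  moreover have "min d (L - d) \<noteq> 0"
    using assms(1) by linarith
  ultimately show ?thesis
    unfolding potential_def by simp
qed

lemma leaf_bound_Eps:
  assumes "heavy L d 0 0" "d \<le> L"
  shows "leaf_bound Eps 0 L d"
proof -
  have "min d (L - d) = 0"
    using assms by (auto simp: heavy_def)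
  moreover have "min_weight_words Eps = {[]}"
    by (auto simp: min_weight_words_def)
  ultimately show ?thesis
    by (simp add: leaf_bound_def potential_eq_1)
qed

lemma choose_pred_mult_potential_ones:
  assumes "1 \<le> d" "2 * d \<le> L" "d \<le> 2"
  shows "real (L - 1 choose (d - 1)) * potential L d = real (L choose d)"
proof -
  have "potential L d = real L / real d"
    using potential_small[of d L] assms by (simp add: min_def)
  moreover have "real d * real (L choose d) = real L * real (L - 1 choose (d - 1))"
    using times_binomial_minus1_eq[of d L] assms by (simp flip: of_nat_mult)
  then have "real (L - 1 choose (d - 1)) * (real L / real d) = real (L choose d)"
    using assms by (simp add: field_simps)
  ultimately show ?thesis
    by simp
qed

lemma choose_pred_mult_potential_zeros:
  assumes "1 \<le> L - d" "L \<le> 2 * d" "L - d \<le> 2"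
  shows "real (L - 1 choose d) * potential L d = real (L choose d)"
proof -
  have "min d (L - d) = L - d"
    using assms by simp
  then have "potential L d = real L / real (L - d)"
    using potential_small[of d L] assms by simp
  moreover have "real (L - d) * real (L choose d) = real L * real (L - 1 choose d)"
    using binomial_absorb_comp[of L d] by (simp flip: of_nat_mult)
  then have "real (L - 1 choose d) * (real L / real (L - d)) = real (L choose d)"
    using assms by (simp add: field_simps)
  ultimately show ?thesis
    by simp
qed

lemma leaf_bound_Lit:
  assumes "heavy L d 1 (min_ones (Lit x))" "min_ones (Lit x) \<le> d" "1 - min_ones (Lit x) \<le> L - d"
    "d \<le> L"
  shows "leaf_bound (Lit x) 1 L d"
proof -
  have words: "min_weight_words (Lit x) = {[x]}"
    by (auto simp: min_weight_words_def)
  show ?thesis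
  proof (cases x)
    case True
    then consider "d = L" | "1 \<le> d" "2 * d \<le> L" "d \<le> 2"
      using assms by (auto simp: heavy_def)
    then show ?thesis
    proof cases
      case 2
      then show ?thesis
        using True words choose_pred_mult_potential_ones[OF 2] by (simp add: leaf_bound_def)
    qed (use True words in \<open>simp add: leaf_bound_def potential_eq_1\<close>)
  next
    case False
    then consider "d = 0" | "1 \<le> L - d" "L \<le> 2 * d" "L - d \<le> 2"
      using assms by (auto simp: heavy_def)
    then show ?thesis
    proof cases
      case 2
      then show ?thesis
        using False words choose_pred_mult_potential_zeros[OF 2] by (simp add: leaf_bound_def)
    qed (use False words in \<open>simp add: leaf_bound_def potential_eq_1\<close>)
  qed
qed

lemma leaf_bound_Union:
  assumes "min_ones r = min_ones (Union r s) \<Longrightarrow> leaf_bound r l L d"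
    and "min_ones s = min_ones (Union r s) \<Longrightarrow> leaf_bound s l L d"
  shows "leaf_bound (Union r s) l L d"
proof -
  define m where "m = min_ones (Union r s)"
  define f where "f = real (L - l choose (d - m)) * potential L d"
  have f_nonneg: "0 \<le> f"
    by (simp add: f_def potential_nonneg)
  have bound: "real (if min_ones t = m then card (min_weight_words t) else 0) * f \<le> real (leaves t) * real (L choose d)"
    if "min_ones t = m \<Longrightarrow> leaf_bound t l L d" for t
    using that by (auto simp: leaf_bound_def f_def mult.assoc)
  have "real (card (min_weight_words (Union r s))) * f
      \<le> (real (if min_ones r = m then card (min_weight_words r) else 0)
        + real (if min_ones s = m then card (min_weight_words s) else 0)) * f"
    using card_min_weight_words_Union[of r s] f_nonneg unfolding m_def
    by (intro mult_right_mono) (simp_all flip: of_nat_add)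
  also have "\<dots> \<le> real (leaves (Union r s)) * real (L choose d)"
    using bound[OF assms(1)[folded m_def]] bound[OF assms(2)[folded m_def]] by (simp add: algebra_simps)
  finally show ?thesis
    by (simp add: leaf_bound_def f_def m_def mult.assoc)
qed

lemma choose_mult_choose_le_choose_diff:
  assumes "l1 + l2 \<le> L" "m1 + m2 \<le> d"
  shows "(l2 choose m2) * (L - (l1 + l2) choose (d - (m1 + m2))) \<le> L - l1 choose (d - m1)"
  using choose_mult_choose_le_choose_add[of l2 m2 "L - (l1 + l2)" "d - (m1 + m2)"] assms
  by (simp add: add.commute)

lemma bound_extend_by_factor:
  assumes "A \<le> A1 * real (l2 choose m2)" "A1 * real (L - l1 choose (d - m1)) * p \<le> B"
    "l1 + l2 \<le> L" "m1 + m2 \<le> d" "0 \<le> A1" "0 \<le> p"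
  shows "A * real (L - (l1 + l2) choose (d - (m1 + m2))) * p \<le> B"
proof -
  have "A * real (L - (l1 + l2) choose (d - (m1 + m2))) * p
      \<le> A1 * real ((l2 choose m2) * (L - (l1 + l2) choose (d - (m1 + m2)))) * p"
    using mult_right_mono[OF assms(1), of "real (L - (l1 + l2) choose (d - (m1 + m2))) * p"] assms(6)
    by (simp add: mult.assoc)
  also have "\<dots> \<le> A1 * real (L - l1 choose (d - m1)) * p"
  proof -
    have "real ((l2 choose m2) * (L - (l1 + l2) choose (d - (m1 + m2)))) \<le> real (L - l1 choose (d - m1))"
      using choose_mult_choose_le_choose_diff[OF assms(3,4)] by (simp only: of_nat_le_iff)
    then show ?thesis
      using assms(5,6) by (intro mult_right_mono mult_left_mono)
  qed
  finally show ?thesis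
    using assms(2) by linarith
qed

lemma leaf_bound_Concat_left:
  assumes "leaf_bound r l1 L d" "homogeneous s l2" "l1 + l2 \<le> L" "min_ones r + min_ones s \<le> d"
  shows "leaf_bound (Concat r s) (l1 + l2) L d"
proof -
  have "real (card (min_weight_words (Concat r s)))
      \<le> real (card (min_weight_words r)) * real (l2 choose min_ones s)"
    using card_min_weight_words_Concat[of r s] card_min_weight_words_le[OF assms(2)]
    by (metis le_trans mult_le_mono2 of_nat_le_iff of_nat_mult)
  then have "real (card (min_weight_words (Concat r s)))
      * real (L - (l1 + l2) choose (d - (min_ones r + min_ones s))) * potential L d
      \<le> real (leaves r) * real (L choose d)"
    using assms(1,3,4) potential_nonneg unfolding leaf_bound_def
    by (intro bound_extend_by_factor[where ?A1.0 = "real (card (min_weight_words r))"]) simp_all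
  also have "\<dots> \<le> real (leaves (Concat r s)) * real (L choose d)"
    by (intro mult_right_mono) simp_all
  finally show ?thesis
    by (simp add: leaf_bound_def)
qed

lemma leaf_bound_Concat_right:
  assumes "leaf_bound s l2 L d" "homogeneous r l1" "l1 + l2 \<le> L" "min_ones r + min_ones s \<le> d"
  shows "leaf_bound (Concat r s) (l1 + l2) L d"
proof -
  have "real (card (min_weight_words (Concat r s)))
      \<le> real (card (min_weight_words s)) * real (l1 choose min_ones r)"
    using card_min_weight_words_Concat[of r s] card_min_weight_words_le[OF assms(2)]
    by (metis le_trans mult.commute mult_le_mono2 of_nat_le_iff of_nat_mult)
  then have "real (card (min_weight_words (Concat r s)))
      * real (L - (l2 + l1) choose (d - (min_ones s + min_ones r))) * potential L d
      \<le> real (leaves s) * real (L choose d)"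
    using assms(1,3,4) potential_nonneg unfolding leaf_bound_def
    by (intro bound_extend_by_factor[where ?A1.0 = "real (card (min_weight_words s))"]) simp_all
  also have "\<dots> \<le> real (leaves (Concat r s)) * real (L choose d)"
    by (intro mult_right_mono) simp_all
  finally show ?thesis
    by (simp add: leaf_bound_def add.commute)
qed

lemma leaf_bound_of_potential_splits:
  assumes own: "leaf_bound r l l (min_ones r)" and "potential_splits L d l (min_ones r)"
    and "min_ones r \<le> l"
  shows "leaf_bound r l L d"
proof -
  define A m where "A = real (card (min_weight_words r))" and "m = min_ones r"
  have "0 < real (l choose m)"
    using assms(3) by (simp add: m_def)
  have "A * real (L - l choose (d - m)) * potential L d * real (l choose m)
      = A * (potential L d * (real (l choose m) * real (L - l choose (d - m))))"
    by (simp only: ac_simps)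
  also have "\<dots> \<le> A * (potential l m * real (L choose d))"
    using assms(2) by (intro mult_left_mono) (simp_all add: potential_splits_def A_def m_def)
  also have "\<dots> = (A * potential l m) * real (L choose d)"
    by (simp only: ac_simps)
  also have "\<dots> \<le> (real (leaves r) * real (l choose m)) * real (L choose d)"
    using own by (intro mult_right_mono) (simp_all add: leaf_bound_def A_def m_def)
  finally show ?thesis
    using \<open>0 < real (l choose m)\<close> unfolding leaf_bound_def A_def m_def
    by (simp add: ac_simps mult_le_cancel_right)
qed

lemma leaf_bound_Concat:
  assumes r: "homogeneous r l1" and s: "homogeneous s l2"
    and r_bound: "\<And>L d. min_ones r \<le> d \<Longrightarrow> l1 - min_ones r \<le> L - d \<Longrightarrow> d \<le> L
      \<Longrightarrow> heavy L d l1 (min_ones r) \<Longrightarrow> leaf_bound r l1 L d"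
    and s_bound: "\<And>L d. min_ones s \<le> d \<Longrightarrow> l2 - min_ones s \<le> L - d \<Longrightarrow> d \<le> L
      \<Longrightarrow> heavy L d l2 (min_ones s) \<Longrightarrow> leaf_bound s l2 L d"
    and "min_ones (Concat r s) \<le> d" "l1 + l2 - min_ones (Concat r s) \<le> L - d" "d \<le> L"
    and "heavy L d (l1 + l2) (min_ones (Concat r s))"
  shows "leaf_bound (Concat r s) (l1 + l2) L d"
proof -
  have m: "min_ones r \<le> l1" "min_ones s \<le> l2"
    using homogeneous_min_ones_le r s by blast+
  have le: "l1 + l2 \<le> L" "min_ones r + min_ones s \<le> d"
    using assms(5-7) m by simp_all
  have diff: "l1 + l2 - (min_ones r + min_ones s) \<le> L - d"
    using assms(6) by simp
  then have cond: "min_ones r \<le> d" "l1 - min_ones r \<le> L - d" "min_ones s \<le> d" "l2 - min_ones s \<le> L - d"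
    using le(2) m by linarith+
  have "heavy L d (l1 + l2) (min_ones r + min_ones s)"
    using assms(8) by simp
  from heavy_or_potential_splits[OF this m le(2) diff \<open>d \<le> L\<close>]
  have "leaf_bound r l1 L d \<or> leaf_bound s l2 L d"
  proof (elim disjE)
    assume "heavy L d l1 (min_ones r)"
    then show ?thesis
      using r_bound cond \<open>d \<le> L\<close> by blast
  next
    assume "heavy L d l2 (min_ones s)"
    then show ?thesis
      using s_bound cond \<open>d \<le> L\<close> by blast
  next
    assume "potential_splits L d l1 (min_ones r)"
    then show ?thesis
      using leaf_bound_of_potential_splits r_bound[OF order_refl _ _ heavy_self] m by simp
  next
    assume "potential_splits L d l2 (min_ones s)"
    then show ?thesis
      using leaf_bound_of_potential_splits s_bound[OF order_refl _ _ heavy_self] m by simp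
  qed
  then show ?thesis
    using leaf_bound_Concat_left[OF _ s le] leaf_bound_Concat_right[OF _ r le] by blast
qed

lemma leaf_bound_heavy:
  assumes "homogeneous r l" "min_ones r \<le> d" "l - min_ones r \<le> L - d" "d \<le> L"
    "heavy L d l (min_ones r)"
  shows "leaf_bound r l L d"
  using assms
proof (induction r arbitrary: l L d)
  case Eps
  then have "l = 0"
    by (simp add: homogeneous_def)
  then show ?case
    using Eps leaf_bound_Eps by simp
next
  case (Lit x)
  then have "l = 1"
    by (simp add: homogeneous_def)
  then show ?case
    using Lit leaf_bound_Lit by simp
next
  case (Union r s)
  have "homogeneous r l" "homogeneous s l"
    using Union.prems(1) by (simp_all add: homogeneous_Union)
  show ?case
  proof (rule leaf_bound_Union)
    assume eq: "min_ones r = min_ones (Union r s)"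
    show "leaf_bound r l L d"
      using Union.prems(2-5) unfolding eq[symmetric] by (rule Union.IH(1)[OF \<open>homogeneous r l\<close>])
  next
    assume eq: "min_ones s = min_ones (Union r s)"
    show "leaf_bound s l L d"
      using Union.prems(2-5) unfolding eq[symmetric] by (rule Union.IH(2)[OF \<open>homogeneous s l\<close>])
  qed
next
  case (Concat r s)
  obtain l1 l2 where r: "homogeneous r l1" and s: "homogeneous s l2" and l: "l = l1 + l2"
    using homogeneous_Concat[OF Concat.prems(1)] .
  show ?case
    unfolding l using Concat.prems unfolding l
    by (intro leaf_bound_Concat[OF r s Concat.IH(1)[OF r] Concat.IH(2)[OF s]])
qed

section \<open>Threshold languages\<close>

fun word_rexp :: "bool list \<Rightarrow> rexp" where
  "word_rexp [] = Eps"
| "word_rexp (x # w) = Concat (Lit x) (word_rexp w)"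

lemma lang_word_rexp: "lang (word_rexp w) = {w}"
  by (induction w) auto

lemma ex_rexp_lang: "finite L \<Longrightarrow> L \<noteq> {} \<Longrightarrow> \<exists>r. lang r = L"
proof (induction L rule: finite_ne_induct)
  case (singleton w)
  then show ?case
    using lang_word_rexp by blast
next
  case (insert w L)
  then obtain r where "lang r = L"
    by blast
  then have "lang (Union (word_rexp w) r) = insert w L"
    by (simp add: lang_word_rexp)
  then show ?case
    by blast
qed

lemma rpn_attained:
  assumes "finite L" "L \<noteq> {}"
  obtains r where "lang r = L" "nodes r = rpn L"
proof -
  have "\<exists>m r. lang r = L \<and> nodes r = m"
    using ex_rexp_lang[OF assms] by blast
  then have "\<exists>r. lang r = L \<and> nodes r = rpn L"
    unfolding rpn_def by (rule LeastI_ex)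
  then show ?thesis
    using that by blast
qed

lemma finite_threshold_lang: "finite (threshold_lang n k)"
  by (rule finite_subset[OF _ finite_lists_length_eq[of UNIV n]]) (auto simp: threshold_lang_def)

lemma ones_replicate [simp]: "ones (replicate j x) = (if x then j else 0)"
  by (cases x; induction j) simp_all

lemma threshold_lang_witness:
  "k \<le> n \<Longrightarrow> replicate k True @ replicate (n - k) False \<in> threshold_lang n k"
  by (simp add: threshold_lang_def)

lemma potential_le_leaves_threshold:
  assumes r: "lang r = threshold_lang n k" and "k \<le> n"
  shows "potential n k \<le> real (leaves r)"
proof -
  have "min_ones r \<le> k"
    using min_ones_le[OF threshold_lang_witness[OF assms(2), folded r]] by simp
  moreover have "k \<le> min_ones r"
    using min_ones_attained[of r] r by (auto simp: threshold_lang_def)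
  ultimately have "min_ones r = k"
    by simp
  then have "min_weight_words r = slice n k"
    unfolding min_weight_words_def slice_def r threshold_lang_def by auto
  moreover have "leaf_bound r n n k"
    using r \<open>min_ones r = k\<close> \<open>k \<le> n\<close>
    by (intro leaf_bound_heavy) (auto simp: homogeneous_def threshold_lang_def heavy_def)
  ultimately have "real (n choose k) * potential n k \<le> real (leaves r) * real (n choose k)"
    using \<open>min_ones r = k\<close> by (simp add: leaf_bound_def card_slice)
  then show ?thesis
    using \<open>k \<le> n\<close> by (simp add: mult.commute)
qed

lemma rpn_threshold_lang_ge:
  assumes "1 \<le> k" "2 * k \<le> n"
  shows "real n * growth k / real k \<le> real (rpn (threshold_lang n k))"
    and "2 * real n - 1 \<le> real (rpn (threshold_lang n k))"
proof -
  define w where "w = replicate k True @ replicate (n - k) False"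
  have w: "w \<in> threshold_lang n k"
    using threshold_lang_witness assms by (simp add: w_def)
  then have "threshold_lang n k \<noteq> {}"
    by blast
  then obtain r where r: "lang r = threshold_lang n k" and rpn: "nodes r = rpn (threshold_lang n k)"
    by (rule rpn_attained[OF finite_threshold_lang])
  have "min k (n - k) = k" "k \<noteq> 0"
    using assms by simp_all
  then have "potential n k = real n * growth k / real k"
    unfolding potential_def by simp
  then have potential_le: "real n * growth k / real k \<le> real (leaves r)"
    using potential_le_leaves_threshold[OF r] assms by simp
  have length_le: "real n \<le> real (leaves r)"
    using length_le_leaves[of w r] w r by (simp add: w_def)
  have "real (nodes r + 1) = real (2 * leaves r)"
    by (simp only: nodes_eq_leaves)
  then have nodes: "real (nodes r) + 1 = 2 * real (leaves r)"
    by simp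
  show "real n * growth k / real k \<le> real (rpn (threshold_lang n k))"
    using potential_le length_le nodes assms unfolding rpn[symmetric] by linarith
  show "2 * real n - 1 \<le> real (rpn (threshold_lang n k))"
    using length_le nodes unfolding rpn[symmetric] by linarith
qed

lemma floor_log_le_log:
  assumes "1 \<le> k"
  shows "real (floor_log k) \<le> log 2 (real k)" "log 2 (real k) < real (floor_log k) + 1"
proof -
  have "real (floor_log k) = of_int \<lfloor>log 2 (real k)\<rfloor>"
    using assms by (simp add: floor_log_altdef)
  then show "real (floor_log k) \<le> log 2 (real k)" "log 2 (real k) < real (floor_log k) + 1"
    by linarith+
qed

lemma growth_div_ge:
  assumes "1 \<le> k" "24 \<le> floor_log k"
  defines "x \<equiv> real (floor_log k)"
  shows "2 powr ((x - 24)\<^sup>2 / 48 - 1 - (x + 1)) \<le> growth k / real k"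
proof -
  define E where "E = (floor_log k - 24)\<^sup>2 div 48"
  have "(floor_log k - 24)\<^sup>2 < 48 * (E + 1)"
    unfolding E_def by presburger
  then have "real ((floor_log k - 24)\<^sup>2) < real (48 * (E + 1))"
    by (simp only: of_nat_less_iff)
  moreover have "real ((floor_log k - 24)\<^sup>2) = (x - 24)\<^sup>2"
    using assms(2) by (simp add: x_def of_nat_diff)
  ultimately have "(x - 24)\<^sup>2 / 48 - 1 \<le> real E"
    by simp
  moreover have "real k < 2 powr (x + 1)"
    using floor_log_le_log[OF assms(1)] assms(1) by (simp add: x_def log_less_iff)
  ultimately have "2 powr ((x - 24)\<^sup>2 / 48 - 1 - (x + 1)) \<le> 2 powr real E / 2 powr (x + 1)"
    unfolding powr_diff[symmetric] by simp
  also have "\<dots> \<le> 2 powr real E / real k"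
    using \<open>real k < 2 powr (x + 1)\<close> assms(1) by (intro divide_left_mono) auto
  also have "\<dots> = growth k / real k"
    by (simp add: growth_def E_def powr_realpow)
  finally show ?thesis .
qed

lemma quadratic_gap:
  fixes x :: real
  assumes "200 \<le> x"
  shows "(x + 1)\<^sup>2 / 1000000 \<le> (x - 24)\<^sup>2 / 48 - 1 - (x + 1)"
proof -
  have "200 * x \<le> x * x"
    using assms by (intro mult_right_mono) auto
  moreover have "(x - 24)\<^sup>2 = x * x - 48 * x + 576" "(x + 1)\<^sup>2 = x * x + 2 * x + 1"
    by (simp_all add: power2_eq_square algebra_simps)
  ultimately show ?thesis
    using assms by linarith
qed

lemma powr_mult_log: "0 < y \<Longrightarrow> y powr (c * log 2 y) = 2 powr (c * (log 2 y)\<^sup>2)" for y :: real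
proof -
  assume "0 < y"
  then have "y powr (c * log 2 y) = (2 powr log 2 y) powr (c * log 2 y)"
    by simp
  also have "\<dots> = 2 powr (log 2 y * (c * log 2 y))"
    by (rule powr_powr)
  also have "\<dots> = 2 powr (c * (log 2 y)\<^sup>2)"
    by (simp add: power2_eq_square ac_simps)
  finally show ?thesis .
qed

lemma two_powr_le_three_halves:
  fixes x :: real
  assumes "0 \<le> x" "x < 200"
  shows "2 powr ((x + 1)\<^sup>2 / 1000000) \<le> 3/2"
proof -
  have "(x + 1)\<^sup>2 \<le> 201\<^sup>2"
    using assms by (intro power_mono) auto
  then have "2 powr ((x + 1)\<^sup>2 / 1000000) \<le> 2 powr (1/2)"
    by simp
  also have "\<dots> = sqrt 2"
    by (rule powr_half_sqrt) simp
  also have "\<dots> \<le> sqrt (9/4)"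
    by (rule real_sqrt_le_mono) simp
  also have "\<dots> = 3/2"
    by (rule real_sqrt_unique) (simp_all add: power2_eq_square)
  finally show ?thesis .
qed

lemma powr_log_le_growth:
  assumes "1 \<le> k"
  shows "real k powr (1/1000000 * log 2 (real k)) \<le> max (3/2) (growth k / real k)"
proof -
  define x where "x = real (floor_log k)"
  have "0 \<le> x" "x \<le> log 2 (real k)" "log 2 (real k) < x + 1"
    using floor_log_le_log[OF assms] by (simp_all add: x_def)
  have "real k powr (1/1000000 * log 2 (real k)) = 2 powr (1/1000000 * (log 2 (real k))\<^sup>2)"
    using assms by (intro powr_mult_log) simp
  also have "(log 2 (real k))\<^sup>2 \<le> (x + 1)\<^sup>2"
    using \<open>0 \<le> x\<close> \<open>x \<le> log 2 (real k)\<close> \<open>log 2 (real k) < x + 1\<close> by (intro power_mono) auto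
  then have "2 powr (1/1000000 * (log 2 (real k))\<^sup>2) \<le> 2 powr ((x + 1)\<^sup>2 / 1000000)"
    by simp
  also have "\<dots> \<le> max (3/2) (growth k / real k)"
  proof (cases "x < 200")
    case True
    then show ?thesis
      using two_powr_le_three_halves[OF \<open>0 \<le> x\<close>] by simp
  next
    case False
    then have "2 powr ((x + 1)\<^sup>2 / 1000000) \<le> 2 powr ((x - 24)\<^sup>2 / 48 - 1 - (x + 1))"
      using quadratic_gap[of x] by simp
    also have "\<dots> \<le> growth k / real k"
      using growth_div_ge[OF assms] False by (simp add: x_def)
    finally show ?thesis
      by simp
  qed
  finally show ?thesis .
qed

theorem corollary8p2:
  shows "\<exists>c::real. c > 0 \<and> (\<forall>n k::nat. 2 * k \<le> n \<longrightarrow>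
           real (rpn (threshold_lang n k)) \<ge> real n * (real k) powr (c * log 2 (real k)))"
proof (intro exI[of _ "1/1000000"] conjI allI impI)
  fix n k :: nat
  assume "2 * k \<le> n"
  show "real n * real k powr (1/1000000 * log 2 (real k)) \<le> real (rpn (threshold_lang n k))"
  proof (cases "k = 0")
    case False
    then have "real n * (3/2) \<le> real (rpn (threshold_lang n k))"
      and "real n * (growth k / real k) \<le> real (rpn (threshold_lang n k))"
      using rpn_threshold_lang_ge[of k n] \<open>2 * k \<le> n\<close> by simp_all
    then have "real n * max (3/2) (growth k / real k) \<le> real (rpn (threshold_lang n k))"
      by (simp add: max_def)
    moreover have "real n * real k powr (1/1000000 * log 2 (real k))
        \<le> real n * max (3/2) (growth k / real k)"
      using powr_log_le_growth[of k] False by (intro mult_left_mono) simp_all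
    ultimately show ?thesis
      by linarith
  qed simp
qed simp

end
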